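(* Let $n\ge3$, $d=\phi(n)/2$, $G=\mathrm{Gal}(\mathbf Q(\mu_n)|\mathbf Q)$, $c\in G$ complex conjugation, and let $\Phi=\{\Phi_1,\dots,\Phi_d\}\subseteq G$ be a C.M. type (so $G=\Phi\sqcup c\Phi$). Let $f:G\to\mathbf C$ be odd, i.e. $f(c\circ x)=-f(x)$ for all $x$, and let $M_f$ be the $d\times d$ matrix $[f(\Phi_k^{-1}\circ\Phi_l)]_{l,k}$. If $\langle\chi,f\rangle\neq0$ for all odd characters $\chi$ of $G$, then $M_f$ is invertible and the solution of $M_f\vec X=\vec Y$, $\vec X=(X_1,\dots,X_d)$, $\vec Y=(Y_1,\dots,Y_d)$, is $$X_j=\sum_{\chi\ \mathrm{odd}}\frac{\chi(\Phi_j)\sum_l\overline\chi(\Phi_l)Y_l}{d^2\langle f,\chi\rangle}.$$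
   Context: $\langle a,b\rangle=\frac1{\#G}\sum_{g\in G}a(g)\overline{b(g)}$. A character $\chi$ of $G$ is odd if $\chi(c)=-1$. *)

theory Defs
  imports "HOL-Number_Theory.Number_Theory" "Jordan_Normal_Form.Matrix"
begin

text \<open>G = Gal(Q(mu_n)|Q), identified with (Z/nZ)^* via sigma_a(zeta) = zeta^a.
  Elements are residues a in {0..<n} coprime to n; composition is multiplication mod n.\<close>

definition galG :: "nat \<Rightarrow> nat set" where
  "galG n = {a. a < n \<and> coprime a n}"

definition gmul :: "nat \<Rightarrow> nat \<Rightarrow> nat \<Rightarrow> nat" where
  "gmul n a b = (a * b) mod n"

definition ginv :: "nat \<Rightarrow> nat \<Rightarrow> nat" where
  "ginv n a = (THE b. b \<in> galG n \<and> gmul n a b = 1)"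

text \<open>complex conjugation corresponds to the residue -1 = n - 1\<close>
definition cconj :: "nat \<Rightarrow> nat" where
  "cconj n = n - 1"

text \<open>Characters of G (homomorphisms G -> C^*), normalised to be 0 off G so that
  the set of characters is a set of functions with finitely many members.\<close>
definition is_char :: "nat \<Rightarrow> (nat \<Rightarrow> complex) \<Rightarrow> bool" where
  "is_char n \<chi> \<longleftrightarrow> \<chi> 1 = 1 \<and>
     (\<forall>a\<in>galG n. \<forall>b\<in>galG n. \<chi> (gmul n a b) = \<chi> a * \<chi> b) \<and>
     (\<forall>a. a \<notin> galG n \<longrightarrow> \<chi> a = 0)"

definition odd_chars :: "nat \<Rightarrow> (nat \<Rightarrow> complex) set" where
  "odd_chars n = {\<chi>. is_char n \<chi> \<and> \<chi> (cconj n) = -1}"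

definition ginner :: "nat \<Rightarrow> (nat \<Rightarrow> complex) \<Rightarrow> (nat \<Rightarrow> complex) \<Rightarrow> complex" where
  "ginner n a b = (1 / of_nat (card (galG n))) * (\<Sum>g\<in>galG n. a g * cnj (b g))"

text \<open>A C.M. type, given as an enumeration Phi 0, ..., Phi (d-1) (= Phi_1..Phi_d):
  G is the disjoint union of Phi and c Phi.\<close>
definition cm_type :: "nat \<Rightarrow> nat \<Rightarrow> (nat \<Rightarrow> nat) \<Rightarrow> bool" where
  "cm_type n d Phi \<longleftrightarrow> inj_on Phi {..<d} \<and> Phi ` {..<d} \<subseteq> galG n \<and>
     galG n = Phi ` {..<d} \<union> gmul n (cconj n) ` Phi ` {..<d} \<and>
     Phi ` {..<d} \<inter> gmul n (cconj n) ` Phi ` {..<d} = {}"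

definition odd_fun :: "nat \<Rightarrow> (nat \<Rightarrow> complex) \<Rightarrow> bool" where
  "odd_fun n f \<longleftrightarrow> (\<forall>x\<in>galG n. f (gmul n (cconj n) x) = - f x)"

definition Mf :: "nat \<Rightarrow> nat \<Rightarrow> (nat \<Rightarrow> nat) \<Rightarrow> (nat \<Rightarrow> complex) \<Rightarrow> complex mat" where
  "Mf n d Phi f = mat d d (\<lambda>(l, k). f (gmul n (ginv n (Phi k)) (Phi l)))"

end

theory Submission
  imports Defs "HOL-Algebra.Multiplicative_Group" "Jordan_Normal_Form.Determinant"
begin

(* Write a(chi) = <f, chi>. As f is odd, its Fourier expansion over the characters of the
   finite abelian group G only involves odd characters, f = sum over odd chi of a(chi) chi, so
   M_f = sum over odd chi of a(chi) u(chi) u(chi)^* with u(chi) = (chi(Phi_l))_l. Since G is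
   the disjoint union of Phi and c Phi and odd characters change sign under c, the u(chi) are pairwise
   orthogonal of squared length d, and dually sum over odd chi of chi(Phi_l) cnj(chi(Phi_m))
   is d if l = m and 0 otherwise. Hence the matrix sum over odd chi of
   u(chi) u(chi)^* / (d^2 a(chi)) inverts M_f, which is the stated solution formula.
   The character theory needed (characters separate points, hence there are |G| of them and
   the column orthogonality relations hold) comes from extending a character of a subgroup H
   to the subgroup generated by H and x, one element x at a time. *)

lemma complex_nth_root_exists:
  assumes "0 < m"
  obtains z :: complex where "z ^ m = w"
proof (cases "w = 0")
  case True
  with that assms show ?thesis by force
next
  case False
  with assms have "card {z::complex. z ^ m = w} = m" by (rule card_nth_roots[rotated])
  with assms have "{z::complex. z ^ m = w} \<noteq> {}" by (metis card.empty less_irrefl)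
  with that show ?thesis by blast
qed

lemma nontrivial_root_of_unity:
  assumes "1 < m"
  obtains \<zeta> :: complex where "\<zeta> ^ m = 1" "\<zeta> \<noteq> 1"
proof (rule ccontr)
  assume "\<not> thesis"
  with that have "{z::complex. z ^ m = 1} \<subseteq> {1}" by blast
  then have "card {z::complex. z ^ m = 1} \<le> 1"
    using card_mono[of "{1::complex}"] by simp
  with card_roots_unity_eq[of m] assms show False by simp
qed

definition character_on :: "('a, 'b) monoid_scheme \<Rightarrow> 'a set \<Rightarrow> ('a \<Rightarrow> complex) \<Rightarrow> bool" where
  "character_on G H \<chi> \<longleftrightarrow>
     \<chi> \<one>\<^bsub>G\<^esub> = 1 \<and> (\<forall>a\<in>H. \<forall>b\<in>H. \<chi> (a \<otimes>\<^bsub>G\<^esub> b) = \<chi> a * \<chi> b)"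

definition character :: "('a, 'b) monoid_scheme \<Rightarrow> ('a \<Rightarrow> complex) \<Rightarrow> bool" where
  "character G \<chi> \<longleftrightarrow> character_on G (carrier G) \<chi> \<and> (\<forall>a. a \<notin> carrier G \<longrightarrow> \<chi> a = 0)"

lemma character_one: "character G \<chi> \<Longrightarrow> \<chi> \<one>\<^bsub>G\<^esub> = 1"
  by (simp add: character_def character_on_def)

lemma character_mult:
  "character G \<chi> \<Longrightarrow> a \<in> carrier G \<Longrightarrow> b \<in> carrier G \<Longrightarrow> \<chi> (a \<otimes>\<^bsub>G\<^esub> b) = \<chi> a * \<chi> b"
  by (simp add: character_def character_on_def)

lemma character_outside: "character G \<chi> \<Longrightarrow> a \<notin> carrier G \<Longrightarrow> \<chi> a = 0"
  by (simp add: character_def)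

lemma character_times: "character G \<chi> \<Longrightarrow> character G \<psi> \<Longrightarrow> character G (\<lambda>a. \<chi> a * \<psi> a)"
  by (simp add: character_def character_on_def)

lemma character_cnj: "character G \<chi> \<Longrightarrow> character G (\<lambda>a. cnj (\<chi> a))"
  by (simp add: character_def character_on_def)

lemma (in group) subgroup_nat_pow_closed:
  assumes "subgroup H G" "a \<in> H"
  shows "a [^] (k::nat) \<in> H"
proof (induction k)
  case (Suc k)
  with assms show ?case by (simp add: subgroup.m_closed subgroup.mem_carrier)
qed (use assms in \<open>simp add: subgroup.one_closed\<close>)

lemma (in group) character_on_pow:
  assumes "subgroup H G" "character_on G H \<chi>" "a \<in> H"
  shows "\<chi> (a [^] (k::nat)) = \<chi> a ^ k"
proof (induction k)
  case (Suc k)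
  with assms show ?case
    by (simp add: character_on_def subgroup_nat_pow_closed subgroup.mem_carrier)
qed (use assms in \<open>simp add: character_on_def\<close>)

locale finite_comm_group = comm_group +
  assumes finite_carrier: "finite (carrier G)"
begin

lemma card_carrier_pos: "0 < card (carrier G)"
  using finite_carrier one_closed by (auto simp: card_gt_0_iff)

lemma pow_card_carrier_eq_one: "a \<in> carrier G \<Longrightarrow> a [^] card (carrier G) = \<one>"
  using pow_order_eq_1 unfolding Coset.order_def .

lemma inv_eq_pow_card_carrier:
  assumes "a \<in> carrier G"
  shows "inv a = a [^] (card (carrier G) - 1)"
proof (rule inv_equality)
  have "a [^] (card (carrier G) - 1) \<otimes> a = a [^] card (carrier G)"
    using card_carrier_pos assms by (metis Suc_diff_1 nat_pow_Suc)
  then show "a [^] (card (carrier G) - 1) \<otimes> a = \<one>"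
    using pow_card_carrier_eq_one[OF assms] by simp
qed (use assms in simp_all)

definition adjoin :: "'a set \<Rightarrow> 'a \<Rightarrow> 'a set" where
  "adjoin H x = {h \<otimes> x [^] (i::nat) | h i. h \<in> H}"

lemma adjoinI: "h \<in> H \<Longrightarrow> h \<otimes> x [^] (i::nat) \<in> adjoin H x"
  unfolding adjoin_def by blast

lemma adjoinE:
  assumes "a \<in> adjoin H x"
  obtains h i where "a = h \<otimes> x [^] (i::nat)" "h \<in> H"
  using assms unfolding adjoin_def by blast

lemma subset_adjoin: "subgroup H G \<Longrightarrow> H \<subseteq> adjoin H x"
proof
  fix h assume "subgroup H G" "h \<in> H"
  then show "h \<in> adjoin H x"
    using adjoinI[of h H x 0] subgroup.mem_carrier by force
qed

lemma self_in_adjoin: "subgroup H G \<Longrightarrow> x \<in> carrier G \<Longrightarrow> x \<in> adjoin H x"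
  using adjoinI[of \<one> H x 1] by (simp add: subgroup.one_closed)

lemma mult_adjoin:
  assumes "h \<in> carrier G" "h' \<in> carrier G" "x \<in> carrier G"
  shows "(h \<otimes> x [^] (i::nat)) \<otimes> (h' \<otimes> x [^] j) = (h \<otimes> h') \<otimes> x [^] (i + j)"
  using assms by (simp add: nat_pow_mult m_ac)

lemma subgroup_adjoin:
  assumes H: "subgroup H G" and x: "x \<in> carrier G"
  shows "subgroup (adjoin H x) G"
proof (rule subgroupI)
  show "adjoin H x \<subseteq> carrier G"
    using subgroup.mem_carrier[OF H] x by (auto elim!: adjoinE)
  show "adjoin H x \<noteq> {}"
    using self_in_adjoin[OF H x] by blast
next
  fix a assume "a \<in> adjoin H x"
  then obtain h i where a: "a = h \<otimes> x [^] (i::nat)" and h: "h \<in> H" by (rule adjoinE)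
  have "inv a = inv h \<otimes> x [^] (i * (card (carrier G) - 1))"
    using subgroup.mem_carrier[OF H h] x
    by (simp add: a inv_mult inv_eq_pow_card_carrier[of "x [^] i"] nat_pow_pow)
  then show "inv a \<in> adjoin H x"
    using adjoinI[OF subgroup.m_inv_closed[OF H h]] by simp
next
  fix a b assume "a \<in> adjoin H x" "b \<in> adjoin H x"
  then obtain h i h' j where a: "a = h \<otimes> x [^] (i::nat)" "h \<in> H"
    and b: "b = h' \<otimes> x [^] (j::nat)" "h' \<in> H" by (meson adjoinE)
  then have "a \<otimes> b = (h \<otimes> h') \<otimes> x [^] (i + j)"
    using subgroup.mem_carrier[OF H] x by (simp add: mult_adjoin)
  then show "a \<otimes> b \<in> adjoin H x"
    using adjoinI[OF subgroup.m_closed[OF H a(2) b(2)]] by simp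
qed

definition rel_ord :: "'a set \<Rightarrow> 'a \<Rightarrow> nat" where
  "rel_ord H x = (LEAST m. 0 < m \<and> x [^] m \<in> H)"

lemma rel_ord:
  assumes "subgroup H G" "x \<in> carrier G"
  shows "0 < rel_ord H x" "x [^] rel_ord H x \<in> H"
proof -
  have "\<exists>m::nat. 0 < m \<and> x [^] m \<in> H"
    using card_carrier_pos pow_card_carrier_eq_one[OF assms(2)] subgroup.one_closed[OF assms(1)]
    by (intro exI[of _ "card (carrier G)"]) auto
  from LeastI_ex[OF this] show "0 < rel_ord H x" "x [^] rel_ord H x \<in> H"
    unfolding rel_ord_def by auto
qed

lemma pow_in_subgroup_iff_rel_ord_dvd:
  assumes H: "subgroup H G" and x: "x \<in> carrier G"
  shows "x [^] (k::nat) \<in> H \<longleftrightarrow> rel_ord H x dvd k"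
proof
  define m where "m = rel_ord H x"
  assume k: "x [^] k \<in> H"
  have xmq: "x [^] (m * (k div m)) \<in> H"
    using subgroup_nat_pow_closed[OF H rel_ord(2)[OF H x]] x by (simp add: m_def nat_pow_pow)
  have "x [^] k = x [^] (m * (k div m)) \<otimes> x [^] (k mod m)"
    using x by (simp add: nat_pow_mult)
  then have "x [^] (k mod m) = inv (x [^] (m * (k div m))) \<otimes> x [^] k"
    using x by (simp add: m_assoc[symmetric])
  also have "\<dots> \<in> H"
    using H k xmq by (simp add: subgroup.m_closed subgroup.m_inv_closed)
  finally have "k mod m = 0"
    using not_less_Least[of "k mod m" "\<lambda>m. 0 < m \<and> x [^] m \<in> H"] rel_ord(1)[OF H x]
    unfolding m_def rel_ord_def by auto
  then show "m dvd k" by auto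
next
  assume "rel_ord H x dvd k"
  then obtain q where "k = rel_ord H x * q" ..
  then show "x [^] k \<in> H"
    using subgroup_nat_pow_closed[OF H rel_ord(2)[OF H x]] x by (simp add: nat_pow_pow)
qed

context
  fixes H \<chi> x \<zeta>
  assumes H: "subgroup H G" and \<chi>: "character_on G H \<chi>" and x: "x \<in> carrier G"
    and \<zeta>: "\<zeta> ^ rel_ord H x = \<chi> (x [^] rel_ord H x)"
begin

lemma character_on_pow_in_subgroup:
  assumes "x [^] (k::nat) \<in> H"
  shows "\<chi> (x [^] k) = \<zeta> ^ k"
proof -
  have "rel_ord H x dvd k"
    using assms pow_in_subgroup_iff_rel_ord_dvd[OF H x] by simp
  then obtain q where k: "k = rel_ord H x * q" ..
  then have "\<chi> (x [^] k) = \<chi> (x [^] rel_ord H x) ^ q"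
    using character_on_pow[OF H \<chi> rel_ord(2)[OF H x]] x by (simp add: nat_pow_pow)
  then show ?thesis using \<zeta> by (simp add: k power_mult)
qed

lemma character_on_adjoin_well_defined:
  assumes h: "h \<in> H" "h' \<in> H" and eq: "h \<otimes> x [^] (i::nat) = h' \<otimes> x [^] j"
  shows "\<chi> h * \<zeta> ^ i = \<chi> h' * \<zeta> ^ j"
proof -
  have ordered: "\<chi> h * \<zeta> ^ i = \<chi> h' * \<zeta> ^ j"
    if h: "h \<in> H" "h' \<in> H" and eq: "h \<otimes> x [^] i = h' \<otimes> x [^] j" and "j \<le> (i::nat)"
    for h h' i j
  proof -
    have hG: "h \<in> carrier G" "h' \<in> carrier G" using h H by (auto dest: subgroup.mem_carrier)
    have "(h \<otimes> x [^] (i - j)) \<otimes> x [^] j = h' \<otimes> x [^] j"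
      using eq hG x \<open>j \<le> i\<close> by (simp add: m_assoc nat_pow_mult)
    then have h': "h' = h \<otimes> x [^] (i - j)"
      using hG x by (metis right_cancel m_closed nat_pow_closed)
    then have "x [^] (i - j) = inv h \<otimes> h'"
      using hG x by (simp add: inv_solve_left)
    then have "x [^] (i - j) \<in> H"
      using H h by (simp add: subgroup.m_closed subgroup.m_inv_closed)
    then have "\<chi> h' = \<chi> h * \<zeta> ^ (i - j)"
      using h' h \<chi> by (simp add: character_on_pow_in_subgroup character_on_def)
    then have "\<chi> h' * \<zeta> ^ j = \<chi> h * \<zeta> ^ (i - j + j)"
      by (simp add: power_add mult.assoc)
    with \<open>j \<le> i\<close> show ?thesis by simp
  qed
  show ?thesis
    using ordered[OF h eq] ordered[OF h(2,1) eq[symmetric]] by (cases "j \<le> i") simp_all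
qed

lemma character_on_extend_step:
  obtains \<chi>' where "character_on G (adjoin H x) \<chi>'" "\<forall>a\<in>H. \<chi>' a = \<chi> a" "\<chi>' x = \<zeta>"
proof -
  define \<chi>' where "\<chi>' y = (SOME z. \<exists>h\<in>H. \<exists>i::nat. y = h \<otimes> x [^] i \<and> z = \<chi> h * \<zeta> ^ i)" for y
  have \<chi>'_eq: "\<chi>' (h \<otimes> x [^] i) = \<chi> h * \<zeta> ^ i" if "h \<in> H" for h i
  proof -
    have "\<exists>z. \<exists>h'\<in>H. \<exists>j::nat. h \<otimes> x [^] i = h' \<otimes> x [^] j \<and> z = \<chi> h' * \<zeta> ^ j"
      using that by blast
    from someI_ex[OF this] obtain h' j where
      "h' \<in> H" "h \<otimes> x [^] i = h' \<otimes> x [^] j" "\<chi>' (h \<otimes> x [^] i) = \<chi> h' * \<zeta> ^ j"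
      unfolding \<chi>'_def by blast
    with character_on_adjoin_well_defined[OF that] show ?thesis by simp
  qed
  have "character_on G (adjoin H x) \<chi>'"
    unfolding character_on_def
  proof (intro conjI ballI)
    show "\<chi>' \<one> = 1"
      using \<chi>'_eq[of \<one> 0] subgroup.one_closed[OF H] \<chi> by (simp add: character_on_def)
  next
    fix a b assume "a \<in> adjoin H x" "b \<in> adjoin H x"
    then obtain h i h' j where a: "a = h \<otimes> x [^] (i::nat)" "h \<in> H"
      and b: "b = h' \<otimes> x [^] (j::nat)" "h' \<in> H" by (meson adjoinE)
    then have "a \<otimes> b = (h \<otimes> h') \<otimes> x [^] (i + j)"
      using subgroup.mem_carrier[OF H] x by (simp add: mult_adjoin)
    then show "\<chi>' (a \<otimes> b) = \<chi>' a * \<chi>' b"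
      using \<chi>'_eq[OF subgroup.m_closed[OF H a(2) b(2)]] \<chi>'_eq[OF a(2)] \<chi>'_eq[OF b(2)]
        \<chi> a b by (simp add: power_add character_on_def)
  qed
  moreover have "\<chi>' a = \<chi> a" if "a \<in> H" for a
    using \<chi>'_eq[OF that, of 0] that subgroup.mem_carrier[OF H] by simp
  moreover have "\<chi>' x = \<zeta>"
    using \<chi>'_eq[of \<one> 1] subgroup.one_closed[OF H] \<chi> x by (simp add: character_on_def)
  ultimately show ?thesis using that by blast
qed

end

lemma character_on_extend:
  assumes "subgroup H G" "character_on G H \<chi>"
  obtains \<chi>' where "character_on G (carrier G) \<chi>'" "\<forall>a\<in>H. \<chi>' a = \<chi> a"
  using assms
proof (induction "card (carrier G - H)" arbitrary: H \<chi> thesis rule: less_induct)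
  case less
  show ?case
  proof (cases "H = carrier G")
    case True
    with less.prems show ?thesis by blast
  next
    case False
    then obtain x where x: "x \<in> carrier G" "x \<notin> H"
      using subgroup.subset[OF less.prems(2)] by blast
    obtain \<zeta> where "\<zeta> ^ rel_ord H x = \<chi> (x [^] rel_ord H x)"
      using complex_nth_root_exists rel_ord(1)[OF less.prems(2) x(1)] by blast
    then obtain \<chi>1 where \<chi>1: "character_on G (adjoin H x) \<chi>1" "\<forall>a\<in>H. \<chi>1 a = \<chi> a"
      using character_on_extend_step[OF less.prems(2,3) x(1)] by blast
    have HK: "H \<subseteq> adjoin H x" using subset_adjoin[OF less.prems(2)] .
    have "card (carrier G - adjoin H x) < card (carrier G - H)"
      using finite_carrier HK self_in_adjoin[OF less.prems(2) x(1)] x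
      by (intro psubset_card_mono) auto
    from less.hyps[OF this _ subgroup_adjoin[OF less.prems(2) x(1)] \<chi>1(1)]
    obtain \<chi>2 where \<chi>2: "character_on G (carrier G) \<chi>2" "\<forall>a\<in>adjoin H x. \<chi>2 a = \<chi>1 a"
      by blast
    have "\<forall>a\<in>H. \<chi>2 a = \<chi> a"
      using bspec[OF \<chi>2(2) subsetD[OF HK]] \<chi>1(2) by simp
    with \<chi>2(1) show ?thesis by (rule less.prems(1))
  qed
qed

lemma character_separates:
  assumes g: "g \<in> carrier G" "g \<noteq> \<one>"
  obtains \<chi> where "character G \<chi>" "\<chi> g \<noteq> 1"
proof -
  have triv: "subgroup {\<one>} G" "character_on G {\<one>} (\<lambda>_. 1)"
    by (simp_all add: triv_subgroup character_on_def)
  have "rel_ord {\<one>} g \<noteq> 1" using rel_ord(2)[OF triv(1) g(1)] g by auto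
  then have "1 < rel_ord {\<one>} g" using rel_ord(1)[OF triv(1) g(1)] by linarith
  then obtain \<zeta> :: complex where \<zeta>: "\<zeta> ^ rel_ord {\<one>} g = 1" "\<zeta> \<noteq> 1"
    by (rule nontrivial_root_of_unity)
  obtain \<chi>1 where \<chi>1: "character_on G (adjoin {\<one>} g) \<chi>1" "\<chi>1 g = \<zeta>"
    using character_on_extend_step[OF triv g(1), of \<zeta>] \<zeta>(1) by blast
  obtain \<chi>2 where \<chi>2: "character_on G (carrier G) \<chi>2" "\<forall>a\<in>adjoin {\<one>} g. \<chi>2 a = \<chi>1 a"
    using character_on_extend[OF subgroup_adjoin[OF triv(1) g(1)] \<chi>1(1)] by blast
  have "\<chi>2 g \<noteq> 1"
    using self_in_adjoin[OF triv(1) g(1)] \<chi>1(2) \<chi>2(2) \<zeta>(2) by simp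
  moreover have "character G (\<lambda>y. if y \<in> carrier G then \<chi>2 y else 0)"
    using \<chi>2(1) by (simp add: character_def character_on_def)
  ultimately show ?thesis using that[of "\<lambda>y. if y \<in> carrier G then \<chi>2 y else 0"] g(1) by simp
qed

lemma character_pow_card:
  assumes "character G \<chi>" "a \<in> carrier G"
  shows "\<chi> a ^ card (carrier G) = 1"
proof -
  have "\<chi> (a [^] card (carrier G)) = \<chi> a ^ card (carrier G)"
    using assms subgroup_self by (intro character_on_pow) (auto simp: character_def)
  then show ?thesis
    using assms by (simp add: pow_card_carrier_eq_one character_one)
qed

lemma norm_character: "character G \<chi> \<Longrightarrow> a \<in> carrier G \<Longrightarrow> norm (\<chi> a) = 1"
  using power_eq_1_iff[OF character_pow_card] card_carrier_pos by fastforce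

lemma cnj_character_mult_self: "character G \<chi> \<Longrightarrow> a \<in> carrier G \<Longrightarrow> cnj (\<chi> a) * \<chi> a = 1"
  using complex_norm_square[of "\<chi> a"] norm_character by (simp add: mult.commute)

lemma character_inv:
  assumes "character G \<chi>" "a \<in> carrier G"
  shows "\<chi> (inv a) = cnj (\<chi> a)"
proof -
  have "\<chi> (inv a) * \<chi> a = cnj (\<chi> a) * \<chi> a"
    using assms by (simp add: cnj_character_mult_self character_one flip: character_mult)
  moreover have "\<chi> a \<noteq> 0" using norm_character[OF assms] by auto
  ultimately show ?thesis by simp
qed

lemma finite_characters: "finite {\<chi>. character G \<chi>}"
proof (rule finite_subset)
  show "{\<chi>. character G \<chi>} \<subseteq> {\<chi>. \<forall>a. (a \<in> carrier G \<longrightarrow> \<chi> a \<in> {z. z ^ card (carrier G) = 1})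
                                        \<and> (a \<notin> carrier G \<longrightarrow> \<chi> a = 0)}"
    by (simp add: subset_iff character_pow_card character_outside)
  show "finite {\<chi>. \<forall>a. (a \<in> carrier G \<longrightarrow> \<chi> a \<in> {z. z ^ card (carrier G) = 1})
                     \<and> (a \<notin> carrier G \<longrightarrow> \<chi> a = (0::complex))}"
    using finite_carrier card_carrier_pos
    by (intro finite_set_of_finite_funs finite_roots_unity) simp_all
qed

lemma sum_character:
  assumes \<chi>: "character G \<chi>"
  shows "(\<Sum>a\<in>carrier G. \<chi> a) = (if \<forall>a\<in>carrier G. \<chi> a = 1 then of_nat (card (carrier G)) else 0)"
proof (cases "\<forall>a\<in>carrier G. \<chi> a = 1")
  case False
  then obtain b where b: "b \<in> carrier G" "\<chi> b \<noteq> 1" by blast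
  have "(\<Sum>a\<in>carrier G. \<chi> a) = (\<Sum>a\<in>carrier G. \<chi> (b \<otimes> a))"
    using sum.reindex[OF inj_on_cmult[OF b(1)], of \<chi>] surj_const_mult[OF b(1)] by simp
  also have "\<dots> = \<chi> b * (\<Sum>a\<in>carrier G. \<chi> a)"
    using \<chi> b by (simp add: character_mult sum_distrib_left)
  finally have "(1 - \<chi> b) * (\<Sum>a\<in>carrier G. \<chi> a) = 0" by (simp add: algebra_simps)
  with b(2) False show ?thesis by auto
qed simp

lemma character_orthogonality:
  assumes \<chi>: "character G \<chi>" and \<psi>: "character G \<psi>"
  shows "(\<Sum>a\<in>carrier G. \<chi> a * cnj (\<psi> a)) = (if \<chi> = \<psi> then of_nat (card (carrier G)) else 0)"
proof -
  have "\<chi> a * cnj (\<psi> a) = 1 \<longleftrightarrow> \<chi> a = \<psi> a" if "a \<in> carrier G" for a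
    using cnj_character_mult_self[OF \<psi> that] norm_character[OF \<psi> that]
    by (metis mult.assoc mult.commute mult.right_neutral mult_cancel_left norm_zero zero_neq_one)
  moreover have "\<chi> a = \<psi> a" if "a \<notin> carrier G" for a
    using that \<chi> \<psi> by (simp add: character_outside)
  ultimately have "(\<forall>a\<in>carrier G. \<chi> a * cnj (\<psi> a) = 1) \<longleftrightarrow> \<chi> = \<psi>" by auto
  with sum_character[OF character_times[OF \<chi> character_cnj[OF \<psi>]]] show ?thesis by simp
qed

lemma sum_characters_eq_0:
  assumes a: "a \<in> carrier G" "a \<noteq> \<one>"
  shows "(\<Sum>\<chi> | character G \<chi>. \<chi> a) = 0"
proof -
  obtain \<psi> where \<psi>: "character G \<psi>" "\<psi> a \<noteq> 1" using character_separates[OF a] .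
  let ?shift = "\<lambda>\<chi> x. \<psi> x * \<chi> x"
  have inj: "inj_on ?shift {\<chi>. character G \<chi>}"
  proof (rule inj_onI, rule ext)
    fix \<chi> \<chi>' x assume "\<chi> \<in> {\<chi>. character G \<chi>}" "\<chi>' \<in> {\<chi>. character G \<chi>}" "?shift \<chi> = ?shift \<chi>'"
    then show "\<chi> x = \<chi>' x"
      using norm_character[OF \<psi>(1), of x] fun_cong[of "?shift \<chi>" "?shift \<chi>'" x]
      by (cases "x \<in> carrier G") (auto simp: character_outside)
  qed
  have "?shift ` {\<chi>. character G \<chi>} \<subseteq> {\<chi>. character G \<chi>}"
    using character_times[OF \<psi>(1)] by auto
  then have "?shift ` {\<chi>. character G \<chi>} = {\<chi>. character G \<chi>}"
    using finite_characters inj by (intro endo_inj_surj)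
  then have "(\<Sum>\<chi> | character G \<chi>. \<chi> a) = (\<Sum>\<chi> | character G \<chi>. \<psi> a * \<chi> a)"
    using sum.reindex[OF inj, of "\<lambda>\<chi>. \<chi> a"] by simp
  also have "\<dots> = \<psi> a * (\<Sum>\<chi> | character G \<chi>. \<chi> a)"
    by (simp add: sum_distrib_left)
  finally have "(1 - \<psi> a) * (\<Sum>\<chi> | character G \<chi>. \<chi> a) = 0" by (simp add: algebra_simps)
  with \<psi>(2) show ?thesis by simp
qed

lemma card_characters: "card {\<chi>. character G \<chi>} = card (carrier G)"
proof -
  let ?one = "\<lambda>a. if a \<in> carrier G then 1 else 0"
  have one: "character G ?one" by (simp add: character_def character_on_def)
  have "of_nat (card {\<chi>. character G \<chi>}) = (\<Sum>a\<in>carrier G. \<Sum>\<chi> | character G \<chi>. \<chi> a)"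
    using sum_characters_eq_0 finite_carrier
    by (simp add: sum.remove[OF finite_carrier one_closed] character_one)
  also have "\<dots> = (\<Sum>\<chi> | character G \<chi>. \<Sum>a\<in>carrier G. \<chi> a * cnj (?one a))"
    by (subst sum.swap) simp
  also have "\<dots> = (\<Sum>\<chi> | character G \<chi>. if \<chi> = ?one then of_nat (card (carrier G)) else 0)"
    by (intro sum.cong refl character_orthogonality[OF _ one]) simp
  also have "\<dots> = of_nat (card (carrier G))"
    using finite_characters one by simp
  finally show ?thesis by (simp only: of_nat_eq_iff)
qed

lemma sum_characters:
  assumes "a \<in> carrier G"
  shows "(\<Sum>\<chi> | character G \<chi>. \<chi> a) = (if a = \<one> then of_nat (card (carrier G)) else 0)"
  using assms sum_characters_eq_0 card_characters by (simp add: character_one)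

end


definition odd_characters :: "('a, 'b) monoid_scheme \<Rightarrow> 'a \<Rightarrow> ('a \<Rightarrow> complex) set" where
  "odd_characters G c = {\<chi>. character G \<chi> \<and> \<chi> c = -1}"

definition group_inner :: "('a, 'b) monoid_scheme \<Rightarrow> ('a \<Rightarrow> complex) \<Rightarrow> ('a \<Rightarrow> complex) \<Rightarrow> complex" where
  "group_inner G a b = 1 / of_nat (card (carrier G)) * (\<Sum>g\<in>carrier G. a g * cnj (b g))"

lemma group_inner_swap: "group_inner G b a = cnj (group_inner G a b)"
  by (simp add: group_inner_def cnj_sum mult.commute)

definition cm_type_set :: "('a, 'b) monoid_scheme \<Rightarrow> 'a \<Rightarrow> 'a set \<Rightarrow> bool" where
  "cm_type_set G c P \<longleftrightarrow>
     P \<subseteq> carrier G \<and> carrier G = P \<union> mult G c ` P \<and> P \<inter> mult G c ` P = {}"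

lemma mult_mat_orthogonal_expansion:
  fixes u :: "'i \<Rightarrow> nat \<Rightarrow> complex" and a :: "'i \<Rightarrow> complex"
  assumes S: "finite S"
    and rows: "\<And>i j. i \<in> S \<Longrightarrow> j \<in> S \<Longrightarrow>
                 (\<Sum>k<d. u i k * cnj (u j k)) = (if i = j then of_nat d else 0)"
    and cols: "\<And>l m. l < d \<Longrightarrow> m < d \<Longrightarrow>
                 (\<Sum>i\<in>S. u i l * cnj (u i m)) = (if l = m then of_nat d else 0)"
    and a: "\<And>i. i \<in> S \<Longrightarrow> a i \<noteq> 0"
  shows "mat d d (\<lambda>(l, k). \<Sum>i\<in>S. a i * u i l * cnj (u i k))
         * mat d d (\<lambda>(k, m). \<Sum>i\<in>S. u i k * cnj (u i m) / (of_nat d ^ 2 * a i)) = 1\<^sub>m d"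
    (is "?A * ?B = _")
proof (rule eq_matI)
  fix l m assume "l < dim_row (1\<^sub>m d :: complex mat)" "m < dim_col (1\<^sub>m d :: complex mat)"
  then have l: "l < d" and m: "m < d" by auto
  let ?X = "\<lambda>i k. a i * u i l * cnj (u i k)"
  let ?Y = "\<lambda>j k. u j k * cnj (u j m) / (of_nat d ^ 2 * a j)"
  have "(?A * ?B) $$ (l, m) = (\<Sum>k<d. (\<Sum>i\<in>S. ?X i k) * (\<Sum>j\<in>S. ?Y j k))"
    using l m by (simp add: scalar_prod_def lessThan_atLeast0)
  also have "\<dots> = (\<Sum>k<d. \<Sum>i\<in>S. \<Sum>j\<in>S. ?X i k * ?Y j k)"
    by (simp add: sum_product)
  also have "\<dots> = (\<Sum>i\<in>S. \<Sum>k<d. \<Sum>j\<in>S. ?X i k * ?Y j k)"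
    by (rule sum.swap)
  also have "\<dots> = (\<Sum>i\<in>S. \<Sum>j\<in>S. \<Sum>k<d. ?X i k * ?Y j k)"
    by (intro sum.cong refl sum.swap)
  also have "\<dots> = (\<Sum>i\<in>S. \<Sum>j\<in>S. a i * u i l * cnj (u j m) / (of_nat d ^ 2 * a j)
                                  * (\<Sum>k<d. u j k * cnj (u i k)))"
    by (intro sum.cong refl) (simp add: sum_distrib_left sum_divide_distrib mult_ac)
  also have "\<dots> = (\<Sum>i\<in>S. \<Sum>j\<in>S. if j = i
                      then a i * u i l * cnj (u j m) / (of_nat d ^ 2 * a j) * of_nat d else 0)"
    by (intro sum.cong refl) (simp add: rows)
  also have "\<dots> = (\<Sum>i\<in>S. a i * u i l * cnj (u i m) / (of_nat d ^ 2 * a i) * of_nat d)"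
    using S by (intro sum.cong refl) simp
  also have "\<dots> = (\<Sum>i\<in>S. u i l * cnj (u i m)) / of_nat d"
    using a gr_implies_not0[OF l] by (simp add: sum_divide_distrib power2_eq_square cong: sum.cong)
  also have "\<dots> = 1\<^sub>m d $$ (l, m)"
    using cols l m by simp
  finally show "(?A * ?B) $$ (l, m) = 1\<^sub>m d $$ (l, m)" .
qed auto

lemma mult_mat_vec_sum_expansion:
  fixes u :: "'i \<Rightarrow> nat \<Rightarrow> complex" and w :: "'i \<Rightarrow> complex"
  assumes "Y \<in> carrier_vec d"
  shows "mat d d (\<lambda>(k, m). \<Sum>i\<in>S. u i k * cnj (u i m) / w i) *\<^sub>v Y
           = vec d (\<lambda>k. \<Sum>i\<in>S. u i k * (\<Sum>m<d. cnj (u i m) * Y $ m) / w i)"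
proof (rule eq_vecI)
  fix k assume "k < dim_vec (vec d (\<lambda>k. \<Sum>i\<in>S. u i k * (\<Sum>m<d. cnj (u i m) * Y $ m) / w i))"
  then have k: "k < d" by simp
  have "(mat d d (\<lambda>(k, m). \<Sum>i\<in>S. u i k * cnj (u i m) / w i) *\<^sub>v Y) $ k
          = (\<Sum>m<d. \<Sum>i\<in>S. u i k * cnj (u i m) / w i * Y $ m)"
    using k assms by (simp add: scalar_prod_def lessThan_atLeast0 sum_distrib_right)
  also have "\<dots> = (\<Sum>i\<in>S. \<Sum>m<d. u i k * cnj (u i m) / w i * Y $ m)"
    by (rule sum.swap)
  also have "\<dots> = (\<Sum>i\<in>S. u i k * (\<Sum>m<d. cnj (u i m) * Y $ m) / w i)"
    by (simp add: sum_distrib_left sum_divide_distrib mult_ac)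
  finally show "(mat d d (\<lambda>(k, m). \<Sum>i\<in>S. u i k * cnj (u i m) / w i) *\<^sub>v Y) $ k
                  = vec d (\<lambda>k. \<Sum>i\<in>S. u i k * (\<Sum>m<d. cnj (u i m) * Y $ m) / w i) $ k"
    using k by simp
qed simp

lemma invertible_mat_right_inverse:
  fixes A B :: "'a :: field mat"
  assumes "A \<in> carrier_mat n n" "B \<in> carrier_mat n n" "A * B = 1\<^sub>m n"
  shows "invertible_mat A"
  unfolding invertible_mat_def inverts_mat_def
  using assms mat_mult_left_right_inverse[OF assms] by (auto simp: square_mat.simps)

lemma mult_mat_vec_eq_iff_right_inverse:
  fixes A B :: "'a :: field mat"
  assumes A: "A \<in> carrier_mat n n" and B: "B \<in> carrier_mat n n" and AB: "A * B = 1\<^sub>m n"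
    and X: "X \<in> carrier_vec n" and Y: "Y \<in> carrier_vec n"
  shows "A *\<^sub>v X = Y \<longleftrightarrow> X = B *\<^sub>v Y"
proof
  assume "A *\<^sub>v X = Y"
  then have "B *\<^sub>v Y = (B * A) *\<^sub>v X" using A B X by simp
  also have "\<dots> = X" using mat_mult_left_right_inverse[OF A B AB] X by simp
  finally show "X = B *\<^sub>v Y" ..
next
  assume "X = B *\<^sub>v Y"
  then have "A *\<^sub>v X = (A * B) *\<^sub>v Y" using A B Y by simp
  also have "\<dots> = Y" using AB Y by simp
  finally show "A *\<^sub>v X = Y" .
qed

locale finite_comm_group_involution = finite_comm_group +
  fixes c
  assumes c_closed: "c \<in> carrier G" and c_neq_one: "c \<noteq> \<one>" and c_square: "c \<otimes> c = \<one>"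
begin

lemma inv_c: "inv c = c"
  using c_closed c_square by (intro inv_equality) auto

lemma character_c: "character G \<chi> \<Longrightarrow> \<chi> c = 1 \<or> \<chi> c = -1"
  using character_mult[of G \<chi> c c] c_closed c_square by (simp add: character_one power2_eq_1_iff[unfolded power2_eq_square])

lemma finite_odd_characters: "finite (odd_characters G c)"
  using finite_characters by (rule rev_finite_subset) (auto simp: odd_characters_def)

lemma sum_odd_characters:
  assumes a: "a \<in> carrier G"
  shows "(\<Sum>\<chi>\<in>odd_characters G c. \<chi> a)
           = of_nat (card (carrier G)) / 2 * ((if a = \<one> then 1 else 0) - (if a = c then 1 else 0))"
proof -
  have "odd_characters G c = {\<chi> \<in> {\<chi>. character G \<chi>}. \<chi> c = -1}"
    by (auto simp: odd_characters_def)
  then have "2 * (\<Sum>\<chi>\<in>odd_characters G c. \<chi> a)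
               = (\<Sum>\<chi> | character G \<chi>. if \<chi> c = -1 then 2 * \<chi> a else 0)"
    using sum.inter_filter[OF finite_characters, of "\<lambda>\<chi>. 2 * \<chi> a" "\<lambda>\<chi>. \<chi> c = -1"]
    by (simp add: sum_distrib_left)
  also have "\<dots> = (\<Sum>\<chi> | character G \<chi>. \<chi> a - \<chi> (c \<otimes> a))"
  proof (intro sum.cong refl)
    fix \<chi> assume "\<chi> \<in> {\<chi>. character G \<chi>}"
    then have "character G \<chi>" by simp
    then show "(if \<chi> c = -1 then 2 * \<chi> a else 0) = \<chi> a - \<chi> (c \<otimes> a)"
      using character_c character_mult[OF _ c_closed a] by fastforce
  qed
  also have "\<dots> = of_nat (card (carrier G)) * ((if a = \<one> then 1 else 0) - (if c \<otimes> a = \<one> then 1 else 0))"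
    using a c_closed by (simp add: sum_subtractf sum_characters algebra_simps)
  also have "c \<otimes> a = \<one> \<longleftrightarrow> a = c"
    using right_cancel[OF c_closed a c_closed] m_comm[OF c_closed a] c_square by simp
  finally show ?thesis by (simp add: field_simps)
qed

lemma odd_fourier_expansion:
  assumes f: "\<forall>x\<in>carrier G. f (c \<otimes> x) = - f x" and x: "x \<in> carrier G"
  shows "f x = (\<Sum>\<chi>\<in>odd_characters G c. group_inner G f \<chi> * \<chi> x)"
proof -
  let ?N = "of_nat (card (carrier G)) :: complex"
  have \<chi>_shift: "\<chi> (x \<otimes> inv g) = cnj (\<chi> g) * \<chi> x"
    if "\<chi> \<in> odd_characters G c" "g \<in> carrier G" for \<chi> g
    using that x by (simp add: odd_characters_def character_mult character_inv mult.commute)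
  have sum_shift: "(\<Sum>\<chi>\<in>odd_characters G c. \<chi> (x \<otimes> inv g))
                     = ?N / 2 * ((if g = x then 1 else 0) - (if g = c \<otimes> x then 1 else 0))"
    if g: "g \<in> carrier G" for g
  proof -
    have "x \<otimes> inv g = \<one> \<longleftrightarrow> g = x"
      using inv_solve_right[OF one_closed x g] g by auto
    moreover have "x \<otimes> inv g = c \<longleftrightarrow> g = c \<otimes> x"
      using inv_solve_right[OF c_closed x g] inv_solve_left[OF x c_closed g] inv_c by auto
    ultimately show ?thesis
      using sum_odd_characters[of "x \<otimes> inv g"] x g by simp
  qed
  have inner_shift: "group_inner G f \<chi> * \<chi> x = (\<Sum>g\<in>carrier G. f g * \<chi> (x \<otimes> inv g) / ?N)"
    if "\<chi> \<in> odd_characters G c" for \<chi>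
  proof -
    have "group_inner G f \<chi> * \<chi> x = (\<Sum>g\<in>carrier G. f g * cnj (\<chi> g)) * \<chi> x / ?N"
      by (simp add: group_inner_def)
    also have "\<dots> = (\<Sum>g\<in>carrier G. f g * cnj (\<chi> g) * \<chi> x) / ?N"
      by (simp add: sum_distrib_right)
    also have "\<dots> = (\<Sum>g\<in>carrier G. f g * \<chi> (x \<otimes> inv g) / ?N)"
      by (simp add: sum_divide_distrib \<chi>_shift[OF that] mult.assoc)
    finally show ?thesis .
  qed
  have "(\<Sum>\<chi>\<in>odd_characters G c. group_inner G f \<chi> * \<chi> x)
          = (\<Sum>\<chi>\<in>odd_characters G c. \<Sum>g\<in>carrier G. f g * \<chi> (x \<otimes> inv g) / ?N)"
    by (rule sum.cong[OF refl inner_shift])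
  also have "\<dots> = (\<Sum>g\<in>carrier G. f g * (\<Sum>\<chi>\<in>odd_characters G c. \<chi> (x \<otimes> inv g)) / ?N)"
    by (subst sum.swap) (simp add: sum_distrib_left sum_divide_distrib)
  also have "\<dots> = (\<Sum>g\<in>carrier G. (if g = x then f g / 2 else 0) - (if g = c \<otimes> x then f g / 2 else 0))"
    using card_carrier_pos by (intro sum.cong refl) (simp add: sum_shift)
  also have "\<dots> = f x / 2 - f (c \<otimes> x) / 2"
    using x c_closed by (simp add: sum_subtractf sum.delta[OF finite_carrier])
  also have "\<dots> = f x" using f x by simp
  finally show ?thesis ..
qed

lemma card_cm_type_set:
  assumes "cm_type_set G c P"
  shows "card (carrier G) = 2 * card P"
proof -
  have fin: "finite P" using assms finite_carrier finite_subset by (auto simp: cm_type_set_def)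
  have "inj_on (mult G c) P"
    using assms inj_on_subset[OF inj_on_cmult[OF c_closed]] by (auto simp: cm_type_set_def)
  with assms fin show ?thesis
    by (simp add: cm_type_set_def card_Un_disjoint card_image)
qed

lemma odd_character_orthogonality:
  assumes P: "cm_type_set G c P"
    and \<chi>: "\<chi> \<in> odd_characters G c" and \<psi>: "\<psi> \<in> odd_characters G c"
  shows "(\<Sum>p\<in>P. \<chi> p * cnj (\<psi> p)) = (if \<chi> = \<psi> then of_nat (card P) else 0)"
proof -
  have PG: "P \<subseteq> carrier G" and fin: "finite P"
    using P finite_carrier finite_subset by (auto simp: cm_type_set_def)
  have inj: "inj_on (mult G c) P"
    using inj_on_subset[OF inj_on_cmult[OF c_closed] PG] .
  have "\<chi> (c \<otimes> p) * cnj (\<psi> (c \<otimes> p)) = \<chi> p * cnj (\<psi> p)" if "p \<in> P" for p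
    using \<chi> \<psi> that PG c_closed by (auto simp: odd_characters_def character_mult)
  then have "(\<Sum>p\<in>mult G c ` P. \<chi> p * cnj (\<psi> p)) = (\<Sum>p\<in>P. \<chi> p * cnj (\<psi> p))"
    by (simp add: sum.reindex[OF inj])
  then have "(\<Sum>p\<in>carrier G. \<chi> p * cnj (\<psi> p)) = 2 * (\<Sum>p\<in>P. \<chi> p * cnj (\<psi> p))"
    using P fin by (simp add: cm_type_set_def sum.union_disjoint)
  with character_orthogonality[of \<chi> \<psi>] \<chi> \<psi> card_cm_type_set[OF P] show ?thesis
    by (cases "\<chi> = \<psi>") (simp_all add: odd_characters_def)
qed

lemma sum_odd_characters_cm_type_set:
  assumes P: "cm_type_set G c P" and p: "p \<in> P" and q: "q \<in> P"
  shows "(\<Sum>\<chi>\<in>odd_characters G c. \<chi> p * cnj (\<chi> q)) = (if p = q then of_nat (card P) else 0)"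
proof -
  have pq: "p \<in> carrier G" "q \<in> carrier G" using P p q by (auto simp: cm_type_set_def)
  have "p \<otimes> inv q \<noteq> c"
  proof
    assume "p \<otimes> inv q = c"
    then have "p = c \<otimes> q" using inv_solve_right[OF c_closed pq] by simp
    with P p q show False by (auto simp: cm_type_set_def)
  qed
  moreover have "p \<otimes> inv q = \<one> \<longleftrightarrow> p = q"
    using inv_solve_right[OF one_closed pq] pq by auto
  moreover have "\<chi> p * cnj (\<chi> q) = \<chi> (p \<otimes> inv q)" if "\<chi> \<in> odd_characters G c" for \<chi>
    using that pq by (simp add: odd_characters_def character_mult character_inv)
  ultimately show ?thesis
    using sum_odd_characters[of "p \<otimes> inv q"] pq card_cm_type_set[OF P] by simp
qed


theorem odd_matrix_solution:
  assumes Phi: "inj_on Phi {..<d}" "cm_type_set G c (Phi ` {..<d})"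
    and f: "\<forall>x\<in>carrier G. f (c \<otimes> x) = - f x"
    and nonzero: "\<forall>\<chi>\<in>odd_characters G c. group_inner G \<chi> f \<noteq> 0"
  shows "invertible_mat (mat d d (\<lambda>(l, k). f (inv (Phi k) \<otimes> Phi l))) \<and>
    (\<forall>Y \<in> carrier_vec d. \<forall>X \<in> carrier_vec d.
       mat d d (\<lambda>(l, k). f (inv (Phi k) \<otimes> Phi l)) *\<^sub>v X = Y \<longleftrightarrow>
       X = vec d (\<lambda>j. \<Sum>\<chi>\<in>odd_characters G c.
              \<chi> (Phi j) * (\<Sum>l<d. cnj (\<chi> (Phi l)) * Y $ l)
              / (of_nat d ^ 2 * group_inner G f \<chi>)))"
proof -
  let ?odd = "odd_characters G c"
  have Phi_closed: "Phi k \<in> carrier G" if "k < d" for k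
    using Phi(2) that by (auto simp: cm_type_set_def)
  have card_P: "card (Phi ` {..<d}) = d"
    using card_image[OF Phi(1)] by simp
  have "f (inv (Phi k) \<otimes> Phi l) = (\<Sum>\<chi>\<in>?odd. group_inner G f \<chi> * \<chi> (Phi l) * cnj (\<chi> (Phi k)))"
    if "k < d" "l < d" for k l
  proof -
    have "\<chi> (inv (Phi k) \<otimes> Phi l) = \<chi> (Phi l) * cnj (\<chi> (Phi k))" if "\<chi> \<in> ?odd" for \<chi>
      using that Phi_closed \<open>k < d\<close> \<open>l < d\<close>
      by (simp add: odd_characters_def character_mult character_inv mult.commute)
    then show ?thesis
      using odd_fourier_expansion[OF f, of "inv (Phi k) \<otimes> Phi l"] Phi_closed that
      by (simp add: mult.assoc)
  qed
  then have M_eq: "mat d d (\<lambda>(l, k). f (inv (Phi k) \<otimes> Phi l))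
                     = mat d d (\<lambda>(l, k). \<Sum>\<chi>\<in>?odd. group_inner G f \<chi> * \<chi> (Phi l) * cnj (\<chi> (Phi k)))"
    by (intro cong_mat) auto
  define B where "B = mat d d (\<lambda>(k, m). \<Sum>\<chi>\<in>?odd. \<chi> (Phi k) * cnj (\<chi> (Phi m)) / (of_nat d ^ 2 * group_inner G f \<chi>))"
  have MB: "mat d d (\<lambda>(l, k). f (inv (Phi k) \<otimes> Phi l)) * B = 1\<^sub>m d"
    unfolding M_eq B_def
  proof (rule mult_mat_orthogonal_expansion[OF finite_odd_characters])
    fix \<chi> \<psi> assume "\<chi> \<in> ?odd" "\<psi> \<in> ?odd"
    then show "(\<Sum>k<d. \<chi> (Phi k) * cnj (\<psi> (Phi k))) = (if \<chi> = \<psi> then of_nat d else 0)"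
      using odd_character_orthogonality[OF Phi(2)] card_P by (simp add: sum.reindex[OF Phi(1)])
  next
    fix l m assume lm: "l < d" "m < d"
    then have "Phi l = Phi m \<longleftrightarrow> l = m"
      using inj_onD[OF Phi(1)] by blast
    with lm show "(\<Sum>\<chi>\<in>?odd. \<chi> (Phi l) * cnj (\<chi> (Phi m))) = (if l = m then of_nat d else 0)"
      using sum_odd_characters_cm_type_set[OF Phi(2), of "Phi l" "Phi m"] card_P by simp
  next
    fix \<chi> assume "\<chi> \<in> ?odd"
    then show "group_inner G f \<chi> \<noteq> 0"
      using nonzero group_inner_swap[of G f \<chi>] by auto
  qed
  have B_vec: "B *\<^sub>v Y = vec d (\<lambda>j. \<Sum>\<chi>\<in>?odd. \<chi> (Phi j) * (\<Sum>l<d. cnj (\<chi> (Phi l)) * Y $ l)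
                                          / (of_nat d ^ 2 * group_inner G f \<chi>))"
    if "Y \<in> carrier_vec d" for Y
    unfolding B_def using that by (rule mult_mat_vec_sum_expansion)
  have M: "mat d d (\<lambda>(l, k). f (inv (Phi k) \<otimes> Phi l)) \<in> carrier_mat d d"
    and B: "B \<in> carrier_mat d d"
    by (simp_all add: B_def)
  show ?thesis
    using invertible_mat_right_inverse[OF M B MB] mult_mat_vec_eq_iff_right_inverse[OF M B MB] B_vec
    by simp
qed

end

definition gal_group :: "nat \<Rightarrow> nat monoid" where
  "gal_group n = \<lparr>carrier = galG n, mult = gmul n, one = 1\<rparr>"

lemma gal_group_simps [simp]:
  "carrier (gal_group n) = galG n" "mult (gal_group n) = gmul n" "one (gal_group n) = 1"
  by (simp_all add: gal_group_def)

lemma gmul_closed: "2 \<le> n \<Longrightarrow> a \<in> galG n \<Longrightarrow> b \<in> galG n \<Longrightarrow> gmul n a b \<in> galG n"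
  by (simp add: galG_def gmul_def)

lemma comm_group_gal_group:
  assumes n: "2 \<le> n"
  shows "comm_group (gal_group n)"
proof (rule comm_groupI)
  fix x assume "x \<in> carrier (gal_group n)"
  then have x: "coprime x n" "x < n" by (auto simp: galG_def)
  define y where "y = x ^ (totient n - 1) mod n"
  have "y \<in> galG n" using n x by (simp add: y_def galG_def)
  moreover have "gmul n y x = x ^ totient n mod n"
    using n unfolding y_def gmul_def
    by (metis Suc_diff_1 mod_mult_left_eq power_Suc2 totient_gt_0_iff zero_less_numeral less_le_trans)
  moreover have "x ^ totient n mod n = 1"
    using euler_theorem[OF x(1)] n by (simp add: cong_def)
  ultimately show "\<exists>y\<in>carrier (gal_group n). y \<otimes>\<^bsub>gal_group n\<^esub> x = \<one>\<^bsub>gal_group n\<^esub>"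
    by auto
qed (use n in \<open>auto simp: gmul_closed galG_def gmul_def mod_mult_left_eq mod_mult_right_eq ac_simps\<close>)

lemma finite_comm_group_involution_gal_group:
  assumes n: "3 \<le> n"
  shows "finite_comm_group_involution (gal_group n) (cconj n)"
proof -
  interpret comm_group "gal_group n" using n by (simp add: comm_group_gal_group)
  have "(n - 1) * (n - 1) = 1 + n * (n - 2)"
    using n by (cases n) (auto simp: algebra_simps)
  then have "gmul n (cconj n) (cconj n) = (1 + n * (n - 2)) mod n"
    by (simp only: gmul_def cconj_def)
  also have "\<dots> = 1"
    using n by (simp only: mod_mult_self2) simp
  finally have "gmul n (cconj n) (cconj n) = 1" .
  moreover have "finite (galG n)" by (simp add: galG_def)
  moreover have "cconj n \<in> galG n"
    using n coprime_diff_one_left_nat[of n] by (simp add: galG_def cconj_def)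
  ultimately show ?thesis
    using n by unfold_locales (auto simp: cconj_def)
qed

lemma ginv_eq_inv:
  assumes n: "2 \<le> n" and a: "a \<in> galG n"
  shows "ginv n a = inv\<^bsub>gal_group n\<^esub> a"
proof -
  interpret comm_group "gal_group n" using n by (simp add: comm_group_gal_group)
  show ?thesis unfolding ginv_def
  proof (rule the_equality)
    show "inv\<^bsub>gal_group n\<^esub> a \<in> galG n \<and> gmul n a (inv\<^bsub>gal_group n\<^esub> a) = 1"
      using a inv_closed r_inv by simp
  next
    fix b assume "b \<in> galG n \<and> gmul n a b = 1"
    then show "b = inv\<^bsub>gal_group n\<^esub> a" using a by (metis gal_group_simps inv_equality m_comm)
  qed
qed

theorem lemma5p4:
  fixes n d :: nat and Phi :: "nat \<Rightarrow> nat" and f :: "nat \<Rightarrow> complex"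
  assumes "n \<ge> 3"
    and "d = totient n div 2"
    and "cm_type n d Phi"
    and "odd_fun n f"
    and "\<forall>\<chi>\<in>odd_chars n. ginner n \<chi> f \<noteq> 0"
  shows "invertible_mat (Mf n d Phi f) \<and>
    (\<forall>Y \<in> carrier_vec d. \<forall>X \<in> carrier_vec d.
       Mf n d Phi f *\<^sub>v X = Y \<longleftrightarrow>
       X = vec d (\<lambda>j. \<Sum>\<chi>\<in>odd_chars n.
              \<chi> (Phi j) * (\<Sum>l<d. cnj (\<chi> (Phi l)) * Y $ l)
              / (of_nat d ^ 2 * ginner n f \<chi>)))"
proof -
  interpret finite_comm_group_involution "gal_group n" "cconj n"
    using assms(1) by (rule finite_comm_group_involution_gal_group)
  have Phi: "inj_on Phi {..<d}" "cm_type_set (gal_group n) (cconj n) (Phi ` {..<d})"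
    using assms(3) by (simp_all add: cm_type_def cm_type_set_def)
  have "Mf n d Phi f = mat d d (\<lambda>(l, k). f (inv\<^bsub>gal_group n\<^esub> (Phi k) \<otimes>\<^bsub>gal_group n\<^esub> Phi l))"
    using assms(1,3) by (auto simp: Mf_def cm_type_def ginv_eq_inv intro!: cong_mat)
  moreover have "odd_chars n = odd_characters (gal_group n) (cconj n)"
    by (simp add: odd_chars_def odd_characters_def is_char_def character_def character_on_def)
  moreover have "ginner n = group_inner (gal_group n)"
    by (simp add: ginner_def group_inner_def fun_eq_iff)
  moreover have "\<forall>x\<in>carrier (gal_group n). f (cconj n \<otimes>\<^bsub>gal_group n\<^esub> x) = - f x"
    using assms(4) by (simp add: odd_fun_def)
  ultimately show ?thesis
    using odd_matrix_solution[OF Phi] assms(5) by simp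
qed

end
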